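(* Let $1<p<\infty$, $p'=\frac p{p-1}$, and $\omega\in\widehat{\mathcal{D}}$. Then $(\mathrm{HL}^\omega_p)^\star\simeq\mathrm{HL}^\omega_{p'}$ via the pairing $$\langle f,g\rangle_{A^2_\omega}=\lim_{r\to1^-}\sum_{n=0}^\infty\widehat f(n)\overline{\widehat g(n)}\,\omega_{2n+1}r^n,$$ with equivalence of norms: each $g\in\mathrm{HL}^\omega_{p'}$ induces a bounded linear functional $f\mapsto\langle f,g\rangle_{A^2_\omega}$ on $\mathrm{HL}^\omega_p$ of norm $\asymp\|g\|_{\mathrm{HL}^\omega_{p'}}$, and every bounded linear functional on $\mathrm{HL}^\omega_p$ arises in this way from a unique $g\in\mathrm{HL}^\omega_{p'}$.
   Context: A radial weight is a non-negative $\omega\in L^1([0,1))$ with $\widehat\omega(r)=\int_r^1\omega(s)\,ds>0$ for all $0\le r<1$. $\omega\in\widehat{\mathcal{D}}$ means there is $C\ge1$ with $\widehat\omega(r)\le C\widehat\omega(\frac{1+r}{2})$ for all $0\le r<1$. Moments: $\omega_x=\int_0^1 r^x\omega(r)\,dr$. For $0<q<\infty$, $\mathrm{HL}^\omega_q$ consists of analytic $f(z)=\sum_{n\ge0}\widehat f(n)z^n$ on the unit disc with $\|f\|^q_{\mathrm{HL}^\omega_q}=\sum_{n=0}^\infty|\widehat f(n)|^q(n+1)^{q-2}\omega_{nq+1}<\infty$. *)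

theory Defs
  imports "HOL-Complex_Analysis.Complex_Analysis"
begin

definition omega_hat :: "(real \<Rightarrow> real) \<Rightarrow> real \<Rightarrow> real" where
  "omega_hat \<omega> r = integral {r..<1} \<omega>"

definition radial_weight :: "(real \<Rightarrow> real) \<Rightarrow> bool" where
  "radial_weight \<omega> \<longleftrightarrow>
     (\<forall>s\<in>{0..<1}. 0 \<le> \<omega> s) \<and>
     \<omega> absolutely_integrable_on {0..<1} \<and>
     (\<forall>r\<in>{0..<1}. omega_hat \<omega> r > 0)"

definition Dhat :: "(real \<Rightarrow> real) \<Rightarrow> bool" where
  "Dhat \<omega> \<longleftrightarrow> radial_weight \<omega> \<and>
     (\<exists>C\<ge>1. \<forall>r\<in>{0..<1}. omega_hat \<omega> r \<le> C * omega_hat \<omega> ((1 + r) / 2))"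

definition moment :: "(real \<Rightarrow> real) \<Rightarrow> real \<Rightarrow> real" where
  "moment \<omega> x = integral {0..<1} (\<lambda>s. s powr x * \<omega> s)"

definition tcoeff :: "(complex \<Rightarrow> complex) \<Rightarrow> nat \<Rightarrow> complex" where
  "tcoeff f n = (deriv ^^ n) f 0 / of_nat (fact n)"

definition HL_sum :: "(real \<Rightarrow> real) \<Rightarrow> real \<Rightarrow> (complex \<Rightarrow> complex) \<Rightarrow> nat \<Rightarrow> real" where
  "HL_sum \<omega> q f n = norm (tcoeff f n) powr q * (real n + 1) powr (q - 2) * moment \<omega> (real n * q + 1)"

definition in_HL :: "(real \<Rightarrow> real) \<Rightarrow> real \<Rightarrow> (complex \<Rightarrow> complex) \<Rightarrow> bool" where
  "in_HL \<omega> q f \<longleftrightarrow> f holomorphic_on ball 0 1 \<and> summable (HL_sum \<omega> q f)"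

definition HL_norm :: "(real \<Rightarrow> real) \<Rightarrow> real \<Rightarrow> (complex \<Rightarrow> complex) \<Rightarrow> real" where
  "HL_norm \<omega> q f = (\<Sum>n. HL_sum \<omega> q f n) powr (1 / q)"

definition pair_r :: "(real \<Rightarrow> real) \<Rightarrow> (complex \<Rightarrow> complex) \<Rightarrow> (complex \<Rightarrow> complex) \<Rightarrow> real \<Rightarrow> complex" where
  "pair_r \<omega> f g r = (\<Sum>n. tcoeff f n * cnj (tcoeff g n) * of_real (moment \<omega> (2 * real n + 1)) * of_real r ^ n)"

definition pairing :: "(real \<Rightarrow> real) \<Rightarrow> (complex \<Rightarrow> complex) \<Rightarrow> (complex \<Rightarrow> complex) \<Rightarrow> complex" where
  "pairing \<omega> f g = Lim (at_left 1) (pair_r \<omega> f g)"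

end

theory Submission
  imports Defs
begin

text \<open>
  For \<open>Dhat \<omega>\<close> the moments satisfy \<open>\<omega>\<^sub>x \<le> K \<omega>\<^sub>2\<^sub>x\<close>, so \<open>\<omega>\<^sub>n\<^sub>p\<^sub>+\<^sub>1\<close>, \<open>\<omega>\<^sub>n\<^sub>p\<^sub>'\<^sub>+\<^sub>1\<close> and
  \<open>\<omega>\<^sub>2\<^sub>n\<^sub>+\<^sub>1\<close> are all comparable. Then \<open>\<omega>\<^sub>2\<^sub>n\<^sub>+\<^sub>1\<close> is comparable to the geometric mean of the
  coefficient weights of \<open>HL\<^sup>\<omega>\<^sub>p\<close> and \<open>HL\<^sup>\<omega>\<^sub>p\<^sub>'\<close>, Hoelder's inequality makes the pairing series
  absolutely convergent with sum bounded by \<open>K \<parallel>f\<parallel> \<parallel>g\<parallel>\<close>, and Abel's theorem identifies the radial limit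
  with that sum. Conversely, a bounded functional \<open>L\<close> is determined by its values on monomials, since
  polynomials are dense. Testing \<open>L\<close> on the polynomials that norm the pairing, as in the duality
  of sequence spaces, shows that \<open>g\<^sub>n = cnj (L z\<^sup>n) / \<omega>\<^sub>2\<^sub>n\<^sub>+\<^sub>1\<close> are the coefficients of some
  \<open>g \<in> HL\<^sup>\<omega>\<^sub>p\<^sub>'\<close> with \<open>\<parallel>g\<parallel> \<le> K \<parallel>L\<parallel>\<close>; the same test gives the lower norm bound.
\<close>

section \<open>Moments of radial weights\<close>

context
  fixes \<omega> :: "real \<Rightarrow> real"
  assumes weight: "radial_weight \<omega>"
begin

lemma radial_weight_nonneg: "s \<in> {0..<1} \<Longrightarrow> 0 \<le> \<omega> s"
  using weight unfolding radial_weight_def by auto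

lemma omega_hat_pos: "r \<in> {0..<1} \<Longrightarrow> 0 < omega_hat \<omega> r"
  using weight unfolding radial_weight_def by auto

lemma radial_weight_absolutely_integrable_tail:
  "0 \<le> t \<Longrightarrow> \<omega> absolutely_integrable_on {t..<1}"
  using weight unfolding radial_weight_def by (auto intro: set_integrable_subset)

lemma radial_weight_integrable_tail: "0 \<le> t \<Longrightarrow> \<omega> integrable_on {t..<1}"
  using radial_weight_absolutely_integrable_tail set_lebesgue_integral_eq_integral(1) by blast

lemma moment_integrable_tail:
  assumes "0 < x" and "0 \<le> t"
  shows "(\<lambda>s. s powr x * \<omega> s) integrable_on {t..<1}"
proof -
  have "(\<lambda>s. s powr x * \<omega> s) absolutely_integrable_on {t..<1}"
  proof (rule absolutely_integrable_bounded_measurable_product_real)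
    show "(\<lambda>s. s powr x) \<in> borel_measurable (lebesgue_on {t..<1})"
      using assms by (intro continuous_imp_measurable_on_sets_lebesgue continuous_on_powr')
        (auto intro: continuous_intros)
    show "bounded ((\<lambda>s. s powr x) ` {t..<1})"
      using assms by (intro boundedI[of _ 1]) (force intro: powr_le1)
  qed (use assms radial_weight_absolutely_integrable_tail in auto)
  then show ?thesis
    using set_lebesgue_integral_eq_integral(1) by blast
qed

lemma moment_antimono:
  assumes "0 < x" and "x \<le> y"
  shows "moment \<omega> y \<le> moment \<omega> x"
  unfolding moment_def
proof (rule integral_le)
  fix s :: real assume "s \<in> {0..<1}"
  then show "s powr y * \<omega> s \<le> s powr x * \<omega> s"
    using assms radial_weight_nonneg by (intro mult_right_mono powr_mono') auto
qed (use assms moment_integrable_tail in auto)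

lemma omega_hat_le_moment:
  assumes "0 < x" and "0 \<le> t" and "t < 1"
  shows "t powr x * omega_hat \<omega> t \<le> moment \<omega> x"
proof -
  have "t powr x * omega_hat \<omega> t = integral {t..<1} (\<lambda>s. t powr x * \<omega> s)"
    unfolding omega_hat_def by simp
  also have "\<dots> \<le> integral {t..<1} (\<lambda>s. s powr x * \<omega> s)"
  proof (rule integral_le)
    show "(\<lambda>s. t powr x * \<omega> s) integrable_on {t..<1}"
      using integrable_cmul[OF radial_weight_integrable_tail, of t "t powr x"] assms by simp
    fix s assume "s \<in> {t..<1}"
    then show "t powr x * \<omega> s \<le> s powr x * \<omega> s"
      using assms radial_weight_nonneg by (intro mult_right_mono powr_mono2) auto
  qed (use assms moment_integrable_tail in auto)
  also have "\<dots> \<le> moment \<omega> x"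
    unfolding moment_def using assms radial_weight_nonneg
    by (intro integral_subset_le moment_integrable_tail) auto
  finally show ?thesis .
qed

lemma moment_pos:
  assumes "0 < x"
  shows "0 < moment \<omega> x"
proof -
  have "0 < (1/2) powr x * omega_hat \<omega> (1/2)"
    using omega_hat_pos[of "1/2"] by simp
  also have "\<dots> \<le> moment \<omega> x"
    using omega_hat_le_moment[of x "1/2"] assms by simp
  finally show ?thesis .
qed

end

section \<open>The doubling property of moments\<close>

definition dyadic_radius :: "nat \<Rightarrow> real" where
  "dyadic_radius j = 1 - (1/2) ^ j"

lemma dyadic_radius_bounds: "0 \<le> dyadic_radius j" "dyadic_radius j < 1"
  unfolding dyadic_radius_def by (auto simp: power_le_one)

lemma dyadic_radius_Suc: "dyadic_radius (Suc j) = (1 + dyadic_radius j) / 2"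
  unfolding dyadic_radius_def by simp

lemma dyadic_interval_exists:
  "0 \<le> s \<Longrightarrow> s < dyadic_radius N \<Longrightarrow>
     \<exists>j<N. dyadic_radius j \<le> s \<and> s < dyadic_radius (Suc j)"
proof (induction N)
  case (Suc N)
  then show ?case
    by (cases "s < dyadic_radius N") (auto intro: less_SucI)
qed (simp add: dyadic_radius_def)

lemma moment_le_dyadic_sum:
  assumes weight: "radial_weight \<omega>" and "0 < x"
  shows "moment \<omega> x \<le> (\<Sum>j<N. dyadic_radius (Suc j) powr x * omega_hat \<omega> (dyadic_radius j))
                        + omega_hat \<omega> (dyadic_radius N)"
proof -
  define tail where "tail t s = (if s \<in> {t..} then \<omega> s else 0)" for t s
  define h where "h s = (\<Sum>j<N. dyadic_radius (Suc j) powr x * tail (dyadic_radius j) s)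
                        + tail (dyadic_radius N) s" for s
  have tail: "tail t integrable_on {0..<1}" "integral {0..<1} (tail t) = omega_hat \<omega> t"
    if "0 \<le> t" for t
  proof -
    have "{t..} \<inter> {0..<1} = {t..<1::real}" using that by auto
    then show "tail t integrable_on {0..<1}" "integral {0..<1} (tail t) = omega_hat \<omega> t"
      unfolding tail_def integrable_restrict_Int integral_restrict_Int omega_hat_def
      using radial_weight_integrable_tail[OF weight that] by simp_all
  qed
  have scaled_tail: "(\<lambda>s. c * tail (dyadic_radius j) s) integrable_on {0..<1}"
    "integral {0..<1} (\<lambda>s. c * tail (dyadic_radius j) s) = c * omega_hat \<omega> (dyadic_radius j)"
    for c j
    using integrable_on_cmult_left[OF tail(1), of _ c] tail(2) dyadic_radius_bounds by simp_all
  have h_integrable: "h integrable_on {0..<1}"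
    unfolding h_def using tail dyadic_radius_bounds scaled_tail
    by (intro integrable_add integrable_sum) auto
  have "moment \<omega> x \<le> integral {0..<1} h"
    unfolding moment_def
  proof (rule integral_le[OF moment_integrable_tail[OF weight] h_integrable])
    fix s :: real assume s: "s \<in> {0..<1}"
    have w: "0 \<le> \<omega> s" using radial_weight_nonneg[OF weight s] .
    have tail_nonneg: "0 \<le> tail t s" for t using w unfolding tail_def by simp
    have sum_nonneg: "0 \<le> (\<Sum>j<N. dyadic_radius (Suc j) powr x * tail (dyadic_radius j) s)"
      using tail_nonneg by (intro sum_nonneg mult_nonneg_nonneg) auto
    show "s powr x * \<omega> s \<le> h s"
    proof (cases "dyadic_radius N \<le> s")
      case True
      have "s powr x * \<omega> s \<le> tail (dyadic_radius N) s"
        using True s assms w by (simp add: tail_def mult_left_le_one_le powr_le1)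
      then show ?thesis
        unfolding h_def using sum_nonneg by linarith
    next
      case False
      then obtain j where j: "j < N" "dyadic_radius j \<le> s" "s < dyadic_radius (Suc j)"
        using dyadic_interval_exists[of s N] s by auto
      have "s powr x * \<omega> s \<le> dyadic_radius (Suc j) powr x * tail (dyadic_radius j) s"
        using j s assms w unfolding tail_def by (auto intro!: mult_right_mono powr_mono2)
      also have "\<dots> \<le> (\<Sum>j<N. dyadic_radius (Suc j) powr x * tail (dyadic_radius j) s)"
        using j tail_nonneg by (intro member_le_sum) auto
      finally show ?thesis
        unfolding h_def using tail_nonneg[of "dyadic_radius N"] by linarith
    qed
  qed (use assms in auto)
  also have "integral {0..<1} h = (\<Sum>j<N. dyadic_radius (Suc j) powr x * omega_hat \<omega> (dyadic_radius j))
                                   + omega_hat \<omega> (dyadic_radius N)"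
    unfolding h_def using tail dyadic_radius_bounds scaled_tail
    by (simp add: integral_add integral_sum integrable_sum)
  finally show ?thesis .
qed

lemma summable_power_times_exp_doubling:
  fixes C :: real
  assumes "1 \<le> C"
  shows "summable (\<lambda>i. C ^ i * exp (- (2 ^ i) / 4))"
proof -
  obtain i0 :: nat where i0: "4 * ln (2 * C) \<le> real i0"
    using real_arch_simple by blast
  show ?thesis
  proof (rule summable_ratio_test[of "1/2" i0])
    fix n assume n: "i0 \<le> n"
    have "real n \<le> 2 ^ n"
      by (metis less_exp less_imp_le of_nat_le_iff of_nat_numeral of_nat_power)
    then have "ln (2 * C) \<le> 2 ^ n / 4"
      using n i0 by linarith
    moreover have "0 < 2 * C"
      using assms by simp
    ultimately have "2 * C \<le> exp (2 ^ n / 4)"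
      by (metis exp_le_cancel_iff exp_ln)
    then have ratio: "C * exp (- (2 ^ n) / 4) \<le> 1/2"
      by (simp add: exp_minus field_simps)
    have "C ^ Suc n * exp (- (2 ^ Suc n) / 4)
          = (C * exp (- (2 ^ n) / 4)) * (C ^ n * exp (- (2 ^ n) / 4))"
    proof -
      have "exp (- (2 ^ Suc n) / 4) = exp (- (2 ^ n) / 4) * exp (- ((2::real) ^ n) / 4)"
        unfolding mult_exp_exp by simp
      then show ?thesis
        by (simp add: field_simps)
    qed
    also have "\<dots> \<le> 1/2 * (C ^ n * exp (- (2 ^ n) / 4))"
      using ratio assms by (intro mult_right_mono) auto
    finally show "norm (C ^ Suc n * exp (- (2 ^ Suc n) / 4)) \<le> 1/2 * norm (C ^ n * exp (- (2 ^ n) / 4))"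
      using assms by simp
  qed simp
qed

lemma dyadic_exponent_exists:
  assumes "1 \<le> x"
  shows "\<exists>N\<ge>1. (2::real) ^ (N - 1) \<le> x \<and> x \<le> 2 ^ N"
proof -
  obtain k where "x \<le> (2::real) ^ k"
    using real_arch_pow[of 2 x] by (auto dest: less_imp_le)
  then show ?thesis
  proof (induction k)
    case (Suc k)
    then show ?case
      by (cases "x \<le> 2 ^ k") (auto intro!: exI[of _ "Suc k"])
  qed (use assms in \<open>auto intro!: exI[of _ 1]\<close>)
qed

lemma dyadic_radius_powr_le:
  assumes "j < N" and "(2::real) ^ (N - 1) \<le> x"
  shows "dyadic_radius (Suc j) powr x \<le> exp (- (2 ^ (N - j)) / 4)"
proof -
  define u :: real where "u = (1/2) ^ Suc j"
  have "u \<le> 1/2"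
    using power_decreasing[of 1 "Suc j" "1/2::real"] unfolding u_def by simp
  then have u: "0 < u" "u < 1"
    unfolding u_def by auto
  have x: "0 \<le> x"
    using assms(2) zero_le_power[of "2::real" "N - 1"] by linarith
  obtain k where k: "N - 1 = j + k" "N - j = Suc k"
    using assms(1) by (intro that[of "N - 1 - j"]) auto
  have "2 ^ (N - j) / 4 = (2::real) ^ (N - 1) * u"
    unfolding k u_def by (simp add: power_add field_simps)
  also have "\<dots> \<le> x * u"
    using assms(2) u by (intro mult_right_mono) auto
  finally have exponent: "x * ln (1 - u) \<le> - (2 ^ (N - j)) / 4"
    using mult_left_mono[OF ln_le_minus_one[of "1 - u"] x] u by simp
  have "dyadic_radius (Suc j) powr x = exp (x * ln (1 - u))"
    using u unfolding dyadic_radius_def u_def by (simp add: powr_def)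
  then show ?thesis
    using exponent by simp
qed

lemma dyadic_radius_powr_ge:
  assumes "1 \<le> N" and "0 \<le> y" and "y \<le> 2 ^ Suc N"
  shows "exp (-4) \<le> dyadic_radius N powr y"
proof -
  define t where "t = dyadic_radius N"
  have "(1/2::real) ^ N \<le> 1/2"
    using power_decreasing[of 1 N "1/2::real"] assms(1) by simp
  then have t: "1/2 \<le> t" "t < 1"
    unfolding t_def dyadic_radius_def by auto
  have "- (2 * (1/2) ^ N) \<le> 1 - 1 / t"
    using t by (simp add: t_def dyadic_radius_def field_simps)
  also have "\<dots> \<le> ln t"
    using ln_le_minus_one[of "1 / t"] t by (simp add: ln_div)
  finally have "2 ^ Suc N * (- (2 * (1/2) ^ N)) \<le> 2 ^ Suc N * ln t"
    by (intro mult_left_mono) auto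
  then have "exp (-4) \<le> t powr (2 ^ Suc N)"
    using t by (simp add: powr_def power_one_over field_simps)
  also have "\<dots> \<le> t powr y"
    using assms t by (intro powr_mono') auto
  finally show ?thesis
    unfolding t_def .
qed

lemma omega_hat_dyadic_radius_le_power:
  assumes "1 \<le> C" and "\<And>r. r \<in> {0..<1} \<Longrightarrow> omega_hat \<omega> r \<le> C * omega_hat \<omega> ((1 + r) / 2)"
  shows "omega_hat \<omega> (dyadic_radius j) \<le> C ^ d * omega_hat \<omega> (dyadic_radius (j + d))"
proof (induction d)
  case (Suc d)
  have "omega_hat \<omega> (dyadic_radius (j + d)) \<le> C * omega_hat \<omega> (dyadic_radius (Suc (j + d)))"
    using assms(2) dyadic_radius_bounds by (simp add: dyadic_radius_Suc)
  then have "C ^ d * omega_hat \<omega> (dyadic_radius (j + d))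
             \<le> C ^ d * (C * omega_hat \<omega> (dyadic_radius (Suc (j + d))))"
    using assms(1) by (intro mult_left_mono) auto
  then show ?case
    using Suc by (simp add: ac_simps)
qed simp

text \<open>For \<open>2\<^sup>N\<^sup>-\<^sup>1 \<le> x \<le> 2\<^sup>N\<close>, cut \<open>[0,1)\<close> at the radii \<open>t\<^sub>j = 1 - 2\<^sup>-\<^sup>j\<close>. On \<open>[t\<^sub>j, t\<^sub>j\<^sub>+\<^sub>1)\<close> the factor \<open>s\<^sup>x\<close> is
  at most \<open>exp (-2\<^sup>N\<^sup>-\<^sup>j/4)\<close>, which beats the factor \<open>C\<^sup>N\<^sup>-\<^sup>j\<close> by which \<open>omega_hat \<omega> t\<^sub>j\<close> may exceed
  \<open>omega_hat \<omega> t\<^sub>N\<close>; and \<open>omega_hat \<omega> t\<^sub>N\<close> is at most \<open>e\<^sup>4 \<omega>\<^sub>2\<^sub>x\<close>.\<close>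

lemma Dhat_moment_doubling:
  assumes "Dhat \<omega>"
  obtains K where "0 < K" "\<And>x. 1 \<le> x \<Longrightarrow> moment \<omega> x \<le> K * moment \<omega> (2 * x)"
proof -
  have weight: "radial_weight \<omega>"
    using assms unfolding Dhat_def by simp
  obtain C where C: "1 \<le> C" "\<And>r. r \<in> {0..<1} \<Longrightarrow> omega_hat \<omega> r \<le> C * omega_hat \<omega> ((1 + r) / 2)"
    using assms unfolding Dhat_def by blast
  define a where "a i = C ^ i * exp (- (2 ^ i) / 4)" for i
  have a: "summable a" "\<And>i. 0 \<le> a i"
    unfolding a_def using summable_power_times_exp_doubling[OF C(1)] C(1) by auto
  define A where "A = suminf a"
  have "0 \<le> A"
    unfolding A_def using a by (simp add: suminf_nonneg)
  have "moment \<omega> x \<le> (1 + A) * exp 4 * moment \<omega> (2 * x)" if x: "1 \<le> x" for x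
  proof -
    obtain N where N: "1 \<le> N" "2 ^ (N - 1) \<le> x" "x \<le> 2 ^ N"
      using dyadic_exponent_exists[OF x] by auto
    define F where "F = omega_hat \<omega> (dyadic_radius N)"
    have "0 < F"
      unfolding F_def using omega_hat_pos[OF weight] dyadic_radius_bounds by simp
    have "moment \<omega> x \<le> (\<Sum>j<N. dyadic_radius (Suc j) powr x * omega_hat \<omega> (dyadic_radius j)) + F"
      unfolding F_def by (rule moment_le_dyadic_sum[OF weight]) (use x in simp)
    also have "(\<Sum>j<N. dyadic_radius (Suc j) powr x * omega_hat \<omega> (dyadic_radius j)) \<le> (\<Sum>j<N. a (N - j)) * F"
      unfolding sum_distrib_right
    proof (rule sum_mono)
      fix j assume j: "j \<in> {..<N}"
      have "omega_hat \<omega> (dyadic_radius j) \<le> C ^ (N - j) * F"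
        using omega_hat_dyadic_radius_le_power[OF C, of j "N - j"] j unfolding F_def by simp
      then have "dyadic_radius (Suc j) powr x * omega_hat \<omega> (dyadic_radius j)
                 \<le> exp (- (2 ^ (N - j)) / 4) * (C ^ (N - j) * F)"
        using dyadic_radius_powr_le[of j N x] j N dyadic_radius_bounds[of j]
          less_imp_le[OF omega_hat_pos[OF weight, of "dyadic_radius j"]]
        by (intro mult_mono) auto
      then show "dyadic_radius (Suc j) powr x * omega_hat \<omega> (dyadic_radius j) \<le> a (N - j) * F"
        unfolding a_def by (simp add: ac_simps)
    qed
    also have "(\<Sum>j<N. a (N - j)) * F \<le> A * F"
    proof (rule mult_right_mono)
      have "(\<Sum>j<N. a (N - j)) = sum a ((\<lambda>j. N - j) ` {..<N})"
        by (subst sum.reindex) (auto simp: inj_on_def)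
      also have "\<dots> \<le> A"
        unfolding A_def using a by (intro sum_le_suminf) auto
      finally show "(\<Sum>j<N. a (N - j)) \<le> A" .
    qed (use \<open>0 < F\<close> in simp)
    finally have "moment \<omega> x \<le> (1 + A) * F"
      by (simp add: algebra_simps)
    also have "F \<le> exp 4 * moment \<omega> (2 * x)"
    proof -
      have "exp (-4) * F \<le> dyadic_radius N powr (2 * x) * F"
        using dyadic_radius_powr_ge[of N "2 * x"] N x \<open>0 < F\<close> by (intro mult_right_mono) auto
      also have "\<dots> \<le> moment \<omega> (2 * x)"
        using omega_hat_le_moment[OF weight, of "2 * x" "dyadic_radius N"] x dyadic_radius_bounds
        unfolding F_def by simp
      finally show ?thesis
        by (simp add: exp_minus field_simps)
    qed
    finally show ?thesis
      using \<open>0 \<le> A\<close> by (simp add: mult_left_mono ac_simps)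
  qed
  moreover have "0 < (1 + A) * exp 4"
    using \<open>0 \<le> A\<close> by simp
  ultimately show ?thesis
    using that by blast
qed

lemma Dhat_moment_comparable:
  assumes "Dhat \<omega>" and "0 < a"
  obtains K where "0 < K"
    "\<And>n l. a \<le> l \<Longrightarrow> l \<le> b \<Longrightarrow>
       moment \<omega> (real n * l + 1) \<le> K * moment \<omega> (2 * real n + 1) \<and>
       moment \<omega> (2 * real n + 1) \<le> K * moment \<omega> (real n * l + 1)"
proof -
  have weight: "radial_weight \<omega>"
    using assms unfolding Dhat_def by simp
  obtain K where K: "0 < K" "\<And>x. 1 \<le> x \<Longrightarrow> moment \<omega> x \<le> K * moment \<omega> (2 * x)"
    using Dhat_moment_doubling[OF assms(1)] by blast
  obtain k :: nat where k: "max (2 / a) (max b 1) < 2 ^ k"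
    using real_arch_pow[of 2] by fastforce
  have iterate: "moment \<omega> x \<le> K ^ i * moment \<omega> (2 ^ i * x)" if "1 \<le> x" for i x
    using that
  proof (induction i arbitrary: x)
    case (Suc i)
    have "moment \<omega> x \<le> K * moment \<omega> (2 * x)"
      using K Suc.prems by simp
    also have "\<dots> \<le> K * (K ^ i * moment \<omega> (2 ^ i * (2 * x)))"
      using Suc K by (intro mult_left_mono) auto
    finally show ?case
      by (simp add: ac_simps)
  qed simp
  have compare: "moment \<omega> x \<le> K ^ k * moment \<omega> y" if "1 \<le> x" "1 \<le> y" "y \<le> 2 ^ k * x" for x y
  proof -
    have "moment \<omega> x \<le> K ^ k * moment \<omega> (2 ^ k * x)"
      using iterate[OF that(1)] .
    also have "\<dots> \<le> K ^ k * moment \<omega> y"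
      using moment_antimono[OF weight, of y "2 ^ k * x"] K(1) that by (intro mult_left_mono) auto
    finally show ?thesis .
  qed
  show ?thesis
  proof (rule that[of "K ^ k"])
    fix n :: nat and l assume l: "a \<le> l" "l \<le> b"
    have "2 \<le> 2 ^ k * a"
      using k assms(2) by (simp add: field_simps)
    also have "\<dots> \<le> 2 ^ k * l"
      using l by simp
    finally have "real n * 2 \<le> real n * (2 ^ k * l)"
      by (intro mult_left_mono) auto
    then have up: "2 * real n + 1 \<le> 2 ^ k * (real n * l + 1)"
      using k by (simp add: algebra_simps)
    have "real n * l \<le> real n * 2 ^ k"
      using k l by (intro mult_left_mono) auto
    moreover have "2 ^ k * (2 * real n + 1) = real n * 2 ^ k + real n * 2 ^ k + 2 ^ k"
      by (simp add: algebra_simps)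
    moreover have "0 \<le> real n * 2 ^ k"
      by simp
    ultimately have down: "real n * l + 1 \<le> 2 ^ k * (2 * real n + 1)"
      using k by linarith
    show "moment \<omega> (real n * l + 1) \<le> K ^ k * moment \<omega> (2 * real n + 1) \<and>
               moment \<omega> (2 * real n + 1) \<le> K ^ k * moment \<omega> (real n * l + 1)"
      using up down l assms(2) by (auto intro!: compare)
  qed (use K in simp)
qed

lemma Holder_inequality_series:
  fixes x y :: "nat \<Rightarrow> real" and p q :: real
  assumes "1 < p" "1 < q" "1/p + 1/q = 1"
    and "\<And>n. 0 \<le> x n" "\<And>n. 0 \<le> y n"
    and sx: "summable (\<lambda>n. x n powr p)" and sy: "summable (\<lambda>n. y n powr q)"
  shows "summable (\<lambda>n. x n * y n)"
    and "(\<Sum>n. x n * y n) \<le> (\<Sum>n. x n powr p) powr (1/p) * (\<Sum>n. y n powr q) powr (1/q)"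
proof -
  define X where "X = (\<Sum>n. x n powr p)"
  define Y where "Y = (\<Sum>n. y n powr q)"
  have "0 \<le> X" "0 \<le> Y"
    unfolding X_def Y_def using sx sy by (auto intro: suminf_nonneg)
  have "summable (\<lambda>n. x n * y n) \<and> (\<Sum>n. x n * y n) \<le> X powr (1/p) * Y powr (1/q)"
  proof (cases "X = 0 \<or> Y = 0")
    case True
    then have "(\<lambda>n. x n * y n) = (\<lambda>n. 0)"
      using suminf_eq_zero_iff[OF sx] suminf_eq_zero_iff[OF sy] unfolding X_def Y_def by auto
    then show ?thesis
      using \<open>0 \<le> X\<close> \<open>0 \<le> Y\<close> by simp
  next
    case False
    then have "0 < X" "0 < Y"
      using \<open>0 \<le> X\<close> \<open>0 \<le> Y\<close> by auto
    define u where "u n = x n / X powr (1/p)" for n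
    define v where "v n = y n / Y powr (1/q)" for n
    have young: "u n * v n \<le> x n powr p / X / p + y n powr q / Y / q" for n
      using Youngs_inequality[OF assms(1-3), of "u n" "v n"] assms(4,5)[of n] \<open>0 < X\<close> \<open>0 < Y\<close> assms(1,2)
      unfolding u_def v_def by (simp add: powr_divide powr_powr)
    have s_young: "summable (\<lambda>n. x n powr p / X / p + y n powr q / Y / q)"
      by (intro summable_add summable_divide sx sy)
    have s_uv: "summable (\<lambda>n. u n * v n)"
      using young assms(4,5) unfolding u_def v_def
      by (intro summable_comparison_test'[OF s_young]) auto
    have xy: "x n * y n = (X powr (1/p) * Y powr (1/q)) * (u n * v n)" for n
      unfolding u_def v_def using \<open>0 < X\<close> \<open>0 < Y\<close> by simp
    have "(\<Sum>n. u n * v n) \<le> (\<Sum>n. x n powr p / X / p + y n powr q / Y / q)"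
      by (rule suminf_le[OF young s_uv s_young])
    also have "\<dots> = X / X / p + Y / Y / q"
      unfolding X_def Y_def by (intro sums_unique[symmetric] sums_add sums_divide summable_sums sx sy)
    also have "\<dots> = 1"
      using \<open>0 < X\<close> \<open>0 < Y\<close> assms(3) by simp
    finally show ?thesis
      unfolding xy using s_uv \<open>0 < X\<close> \<open>0 < Y\<close> by (simp add: summable_mult suminf_mult mult_left_le)
  qed
  then show "summable (\<lambda>n. x n * y n)"
    and "(\<Sum>n. x n * y n) \<le> (\<Sum>n. x n powr p) powr (1/p) * (\<Sum>n. y n powr q) powr (1/q)"
    unfolding X_def Y_def by auto
qed

lemma summable_Suc_times_geometric:
  fixes q :: real
  assumes "\<bar>q\<bar> < 1"
  shows "summable (\<lambda>n. (real n + 1) * q ^ n)"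
  using termdiff_converges[of q 1 "\<lambda>_. 1"] assms by (simp add: diffs_def summable_geometric add.commute)

lemma abel_tendsto_at_left_1:
  fixes c :: "nat \<Rightarrow> complex"
  assumes "summable (\<lambda>n. norm (c n))"
  shows "((\<lambda>r. \<Sum>n. c n * of_real r ^ n) \<longlongrightarrow> (\<Sum>n. c n)) (at_left 1)"
proof -
  have uniform: "uniform_limit {0..1::real} (\<lambda>N r. \<Sum>n<N. c n * of_real r ^ n)
          (\<lambda>r. \<Sum>n. c n * of_real r ^ n) sequentially"
    by (rule Weierstrass_m_test[OF _ assms])
      (auto simp: norm_mult norm_power intro: mult_left_le power_le_one)
  have "continuous_on {0..1::real} (\<lambda>r. \<Sum>n. c n * of_real r ^ n)"
    by (rule uniform_limit_theorem[OF _ uniform]) (auto intro!: always_eventually continuous_intros)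
  from continuous_on_Icc_at_leftD[OF this] show ?thesis
    by simp
qed

section \<open>Taylor coefficients on the unit disc\<close>

lemma tcoeff_sums:
  assumes "f holomorphic_on ball 0 1" and "z \<in> ball 0 1"
  shows "(\<lambda>n. tcoeff f n * z ^ n) sums f z"
  using holomorphic_power_series[OF assms] unfolding tcoeff_def by simp

lemma tcoeff_eqI:
  assumes "\<And>z. z \<in> ball 0 1 \<Longrightarrow> (\<lambda>n. c n * z ^ n) sums f z"
  shows "tcoeff f n = c n"
proof -
  define F where "F = Abs_fps c"
  have "1 \<le> fps_conv_radius F"
    unfolding fps_conv_radius_def F_def
    using assms by (intro conv_radius_geI_ex') (auto simp: sums_iff)
  then have "0 < fps_conv_radius F"
    by (rule less_le_trans[rotated]) simp
  moreover have "eventually (\<lambda>z. eval_fps F z = f z) (nhds 0)"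
    using assms unfolding eval_fps_def F_def
    by (intro eventually_nhds_in_open[of "ball 0 1", THEN eventually_mono]) (auto simp: sums_iff)
  ultimately have "f has_fps_expansion F"
    unfolding has_fps_expansion_def by blast
  from fps_nth_fps_expansion[OF this, of n] show ?thesis
    unfolding tcoeff_def F_def by simp
qed

lemma tcoeff_eq_imp_eq_on_ball:
  assumes "f holomorphic_on ball 0 1" "g holomorphic_on ball 0 1" "\<And>n. tcoeff f n = tcoeff g n"
    and "z \<in> ball 0 1"
  shows "f z = g z"
proof -
  have "(\<lambda>n. tcoeff g n * z ^ n) sums f z"
    using tcoeff_sums[OF assms(1,4)] unfolding assms(3) .
  then show ?thesis
    using tcoeff_sums[OF assms(2,4)] by (rule sums_unique2)
qed

lemma power_series_holomorphic_on_ball: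
  fixes b :: "nat \<Rightarrow> complex"
  assumes "\<And>\<rho>. 0 \<le> \<rho> \<Longrightarrow> \<rho> < 1 \<Longrightarrow> summable (\<lambda>n. norm (b n) * \<rho> ^ n)"
  shows "(\<lambda>z. \<Sum>n. b n * z ^ n) holomorphic_on ball 0 1"
    and "tcoeff (\<lambda>z. \<Sum>n. b n * z ^ n) n = b n"
proof -
  have summable: "summable (\<lambda>n. b n * z ^ n)" if "z \<in> ball 0 1" for z
  proof (rule summable_norm_cancel)
    show "summable (\<lambda>n. norm (b n * z ^ n))"
      using assms[of "norm z"] that by (simp add: norm_mult norm_power)
  qed
  have "1 \<le> fps_conv_radius (Abs_fps b)"
    unfolding fps_conv_radius_def
  proof (rule conv_radius_geI_ex')
    fix r :: real assume "0 < r" "ereal r < 1"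
    then show "summable (\<lambda>n. fps_nth (Abs_fps b) n * of_real r ^ n)"
      using summable[of "of_real r"] by simp
  qed
  then have "ball 0 1 \<subseteq> eball 0 (fps_conv_radius (Abs_fps b))"
    by (intro ball_eball_mono) (simp add: one_ereal_def)
  then have "eval_fps (Abs_fps b) holomorphic_on ball 0 1"
    by (rule holomorphic_on_eval_fps)
  moreover have "eval_fps (Abs_fps b) = (\<lambda>z. \<Sum>n. b n * z ^ n)"
    unfolding eval_fps_def by simp
  ultimately show "(\<lambda>z. \<Sum>n. b n * z ^ n) holomorphic_on ball 0 1"
    by simp
  show "tcoeff (\<lambda>z. \<Sum>n. b n * z ^ n) n = b n"
    using summable by (intro tcoeff_eqI summable_sums)
qed

section \<open>The spaces \<open>HL\<^sup>\<omega>\<^sub>q\<close>\<close>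

definition HL_weight :: "(real \<Rightarrow> real) \<Rightarrow> real \<Rightarrow> nat \<Rightarrow> real" where
  "HL_weight \<omega> q n = (real n + 1) powr (q - 2) * moment \<omega> (real n * q + 1)"

lemma HL_sum_eq: "HL_sum \<omega> q f n = norm (tcoeff f n) powr q * HL_weight \<omega> q n"
  unfolding HL_sum_def HL_weight_def by simp

lemma HL_weight_pos:
  assumes "radial_weight \<omega>" and "0 \<le> q"
  shows "0 < HL_weight \<omega> q n"
proof -
  have "0 < real n * q + 1"
    using assms(2) by (simp add: add_nonneg_pos)
  then show ?thesis
    unfolding HL_weight_def using moment_pos[OF assms(1)] by simp
qed

lemma HL_sum_nonneg: "radial_weight \<omega> \<Longrightarrow> 0 \<le> q \<Longrightarrow> 0 \<le> HL_sum \<omega> q f n"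
  unfolding HL_sum_eq using HL_weight_pos[of \<omega> q n] by simp

lemma norm_le_of_HL_term_le:
  assumes weight: "radial_weight \<omega>" and "1 \<le> q" and s: "0 < s" "s < 1"
    and bound: "norm w powr q * HL_weight \<omega> q n \<le> B"
  defines "r \<equiv> s powr (1/q)"
  shows "norm w \<le> 1 + B / (r * omega_hat \<omega> r) * (real n + 1) / s ^ n"
proof -
  have r: "0 < r" "r < 1"
    unfolding r_def using powr_less_mono2[of "1/q" s 1] s \<open>1 \<le> q\<close> by simp_all
  define F where "F = omega_hat \<omega> r"
  have "0 < F"
    unfolding F_def using omega_hat_pos[OF weight] r by simp
  have "r powr (real n * q + 1) = r powr (real n * q) * r"
    using r by (simp add: powr_add)
  also have "r powr (real n * q) = s ^ n"
    unfolding r_def using s \<open>1 \<le> q\<close> by (simp add: powr_powr powr_realpow)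
  finally have "s ^ n * r * F \<le> moment \<omega> (real n * q + 1)"
    using omega_hat_le_moment[OF weight, of "real n * q + 1" r] r \<open>1 \<le> q\<close> unfolding F_def
    by (simp add: add_nonneg_pos)
  moreover have "1 / (real n + 1) \<le> (real n + 1) powr (q - 2)"
    using powr_mono[of "-1" "q - 2" "real n + 1"] \<open>1 \<le> q\<close> by (simp add: powr_minus divide_inverse)
  ultimately have "1 / (real n + 1) * (s ^ n * r * F) \<le> HL_weight \<omega> q n"
    unfolding HL_weight_def using s r \<open>0 < F\<close> by (intro mult_mono) auto
  then have "norm w powr q * (s ^ n * r * F / (real n + 1)) \<le> norm w powr q * HL_weight \<omega> q n"
    by (intro mult_left_mono) simp_all
  then have "norm w powr q * (s ^ n * r * F / (real n + 1)) \<le> B"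
    using bound by linarith
  then have "norm w powr q \<le> B / (r * F) * (real n + 1) / s ^ n"
    using s r \<open>0 < F\<close> by (simp add: field_simps)
  moreover have "norm w \<le> 1 + norm w powr q"
  proof (cases "norm w \<le> 1")
    case True
    then show ?thesis
      using powr_ge_zero[of "norm w" q] by linarith
  next
    case False
    then have "norm w powr 1 \<le> norm w powr q"
      using \<open>1 \<le> q\<close> by (intro powr_mono) auto
    then show ?thesis
      using False by simp
  qed
  ultimately show ?thesis
    unfolding F_def by linarith
qed

lemma holomorphic_if_HL_terms_bounded:
  assumes weight: "radial_weight \<omega>" and "1 \<le> q"
    and bound: "\<And>n. norm (b n) powr q * HL_weight \<omega> q n \<le> B"
  shows "(\<lambda>z. \<Sum>n. b n * z ^ n) holomorphic_on ball 0 1"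
    and "tcoeff (\<lambda>z. \<Sum>n. b n * z ^ n) n = b n"
proof -
  have "summable (\<lambda>n. norm (b n) * \<rho> ^ n)" if \<rho>: "0 \<le> \<rho>" "\<rho> < 1" for \<rho>
  proof -
    define s where "s = (1 + \<rho>) / 2"
    have s: "0 < s" "s < 1" "\<rho> < s"
      unfolding s_def using \<rho> by auto
    define c where "c = B / (s powr (1/q) * omega_hat \<omega> (s powr (1/q)))"
    have "norm (b n) * \<rho> ^ n \<le> (1 + c * (real n + 1) / s ^ n) * \<rho> ^ n" for n
      using norm_le_of_HL_term_le[OF weight \<open>1 \<le> q\<close> s(1,2) bound] \<rho> unfolding c_def
      by (intro mult_right_mono) auto
    also have "(1 + c * (real n + 1) / s ^ n) * \<rho> ^ n = \<rho> ^ n + c * ((real n + 1) * (\<rho> / s) ^ n)" for n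
      using s by (simp add: field_simps power_divide)
    finally have coeff: "norm (b n) * \<rho> ^ n \<le> \<rho> ^ n + c * ((real n + 1) * (\<rho> / s) ^ n)" for n .
    have "summable (\<lambda>n. \<rho> ^ n + c * ((real n + 1) * (\<rho> / s) ^ n))"
      using \<rho> s by (intro summable_add summable_geometric summable_mult summable_Suc_times_geometric) auto
    then show ?thesis
      by (rule summable_comparison_test'[where N=0]) (use coeff \<rho> in simp)
  qed
  then show "(\<lambda>z. \<Sum>n. b n * z ^ n) holomorphic_on ball 0 1"
    and "tcoeff (\<lambda>z. \<Sum>n. b n * z ^ n) n = b n"
    using power_series_holomorphic_on_ball by blast+
qed

definition poly_trunc :: "(nat \<Rightarrow> complex) \<Rightarrow> nat \<Rightarrow> complex \<Rightarrow> complex" where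
  "poly_trunc a N z = (\<Sum>n<N. a n * z ^ n)"

lemma poly_trunc_sums: "(\<lambda>n. (if n < N then a n else 0) * z ^ n) sums poly_trunc a N z"
proof -
  have "(\<lambda>n. (if n < N then a n else 0) * z ^ n) sums (\<Sum>n<N. (if n < N then a n else 0) * z ^ n)"
    by (rule sums_finite) auto
  then show ?thesis
    unfolding poly_trunc_def by simp
qed

lemma poly_trunc_holomorphic: "poly_trunc a N holomorphic_on A"
  unfolding poly_trunc_def by (intro holomorphic_intros)

lemma tcoeff_poly_trunc: "tcoeff (poly_trunc a N) n = (if n < N then a n else 0)"
  by (rule tcoeff_eqI[OF poly_trunc_sums])

lemma poly_trunc_monomial: "(\<lambda>z. c * z ^ N) = poly_trunc (\<lambda>n. if n = N then c else 0) (Suc N)"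
  by (auto simp: poly_trunc_def)

lemma HL_sum_poly_trunc:
  "HL_sum \<omega> q (poly_trunc a N) n = (if n < N then norm (a n) powr q * HL_weight \<omega> q n else 0)"
  unfolding HL_sum_eq tcoeff_poly_trunc by simp

lemma in_HL_poly_trunc: "in_HL \<omega> q (poly_trunc a N)"
  unfolding in_HL_def HL_sum_poly_trunc
  by (auto intro: poly_trunc_holomorphic summable_If_finite_set[of "{..<N}", simplified])

lemma HL_norm_poly_trunc:
  "HL_norm \<omega> q (poly_trunc a N) = (\<Sum>n<N. norm (a n) powr q * HL_weight \<omega> q n) powr (1/q)"
  unfolding HL_norm_def HL_sum_poly_trunc
  using sums_unique[OF sums_If_finite_set[of "{..<N}" "\<lambda>n. norm (a n) powr q * HL_weight \<omega> q n"]]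
  by (simp add: lessThan_iff)

lemma HL_tail:
  assumes weight: "radial_weight \<omega>" and "0 < q" and f: "in_HL \<omega> q f"
  defines "tail N \<equiv> \<lambda>z. f z - poly_trunc (tcoeff f) N z"
  shows "in_HL \<omega> q (tail N)" and "(\<lambda>N. HL_norm \<omega> q (tail N)) \<longlonglongrightarrow> 0"
proof -
  have holo: "f holomorphic_on ball 0 1" and sf: "summable (HL_sum \<omega> q f)"
    using f unfolding in_HL_def by auto
  have "tcoeff (tail N) n = (if n < N then 0 else tcoeff f n)" for N n
  proof -
    have "tcoeff (tail N) n = tcoeff f n - (if n < N then tcoeff f n else 0)"
    proof (rule tcoeff_eqI)
      fix z :: complex assume "z \<in> ball 0 1"
      from sums_diff[OF tcoeff_sums[OF holo this] poly_trunc_sums[of N "tcoeff f" z]]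
      show "(\<lambda>n. (tcoeff f n - (if n < N then tcoeff f n else 0)) * z ^ n) sums tail N z"
        unfolding tail_def by (simp add: algebra_simps)
    qed
    then show ?thesis
      by simp
  qed
  then have "HL_sum \<omega> q (tail N) = (\<lambda>n. HL_sum \<omega> q f n - (if n \<in> {..<N} then HL_sum \<omega> q f n else 0))"
    for N
    unfolding HL_sum_eq by auto
  then have tail_sums: "HL_sum \<omega> q (tail N) sums (suminf (HL_sum \<omega> q f) - (\<Sum>n<N. HL_sum \<omega> q f n))" for N
    using sums_diff[OF summable_sums[OF sf] sums_If_finite_set[of "{..<N}" "HL_sum \<omega> q f"]] by simp
  show "in_HL \<omega> q (tail N)" for N
    unfolding in_HL_def
  proof
    show "tail N holomorphic_on ball 0 1"
      unfolding tail_def using holo poly_trunc_holomorphic by (intro holomorphic_intros)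
    show "summable (HL_sum \<omega> q (tail N))"
      using tail_sums by (rule sums_summable)
  qed
  have lim: "(\<lambda>N. suminf (HL_sum \<omega> q f) - (\<Sum>n<N. HL_sum \<omega> q f n)) \<longlonglongrightarrow> 0"
    using tendsto_diff[OF tendsto_const summable_LIMSEQ[OF sf], of "suminf (HL_sum \<omega> q f)"] by simp
  have nonneg: "0 \<le> suminf (HL_sum \<omega> q f) - (\<Sum>n<N. HL_sum \<omega> q f n)" for N
    using sum_le_suminf[OF sf, of "{..<N}"] HL_sum_nonneg[OF weight] \<open>0 < q\<close> by simp
  show "(\<lambda>N. HL_norm \<omega> q (tail N)) \<longlonglongrightarrow> 0"
    unfolding HL_norm_def sums_unique[OF tail_sums, symmetric]
    by (rule tendsto_zero_powrI[OF lim tendsto_const always_eventually[OF allI[OF nonneg]]]) (use \<open>0 < q\<close> in simp)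
qed

definition linear_on_HL :: "(real \<Rightarrow> real) \<Rightarrow> real \<Rightarrow> ((complex \<Rightarrow> complex) \<Rightarrow> complex) \<Rightarrow> bool" where
  "linear_on_HL \<omega> q L \<longleftrightarrow>
     (\<forall>u v. in_HL \<omega> q u \<and> in_HL \<omega> q v \<longrightarrow> L (\<lambda>z. u z + v z) = L u + L v) \<and>
     (\<forall>c u. in_HL \<omega> q u \<longrightarrow> L (\<lambda>z. c * u z) = c * L u)"

section \<open>Duality\<close>

text \<open>Only the comparability of the moments \<open>\<omega>\<^sub>n\<^sub>q\<^sub>+\<^sub>1\<close> (\<open>q = p, p'\<close>) with the pairing weights
  \<open>\<omega>\<^sub>2\<^sub>n\<^sub>+\<^sub>1\<close> is used below; for \<open>Dhat \<omega>\<close> it holds by \<open>Dhat_HL_duality\<close>.\<close>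

locale HL_duality =
  fixes \<omega> :: "real \<Rightarrow> real" and p p' K :: real
  assumes weight: "radial_weight \<omega>"
    and p_gt_1: "1 < p" and conjugate: "p' = p / (p - 1)"
    and K_pos: "0 < K"
    and moment_le_pairing_weight:
      "\<And>n q. q \<in> {p, p'} \<Longrightarrow> moment \<omega> (real n * q + 1) \<le> K * moment \<omega> (2 * real n + 1)"
    and pairing_weight_le_moment:
      "\<And>n q. q \<in> {p, p'} \<Longrightarrow> moment \<omega> (2 * real n + 1) \<le> K * moment \<omega> (real n * q + 1)"
begin

abbreviation pairing_weight :: "nat \<Rightarrow> real" where
  "pairing_weight n \<equiv> moment \<omega> (2 * real n + 1)"

lemma p'_gt_1: "1 < p'"
  using p_gt_1 unfolding conjugate by (simp add: field_simps)

lemma conjugate_exponents: "1 / p + 1 / p' = 1"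
  using p_gt_1 unfolding conjugate by (simp add: field_simps)

lemma pairing_weight_pos: "0 < pairing_weight n"
  using moment_pos[OF weight] by simp

lemma moment_pos_exponents: "q \<in> {p, p'} \<Longrightarrow> 0 < moment \<omega> (real n * q + 1)"
  using moment_pos[OF weight] p_gt_1 p'_gt_1 by (auto simp: add_nonneg_pos)

lemma HL_weight_pos_exponents: "q \<in> {p, p'} \<Longrightarrow> 0 < HL_weight \<omega> q n"
  using HL_weight_pos[OF weight] p_gt_1 p'_gt_1 by auto

lemma HL_weight_geometric_mean:
  "HL_weight \<omega> p n powr (1/p) * HL_weight \<omega> p' n powr (1/p')
     = moment \<omega> (real n * p + 1) powr (1/p) * moment \<omega> (real n * p' + 1) powr (1/p')"
proof -
  have "(p - 2) * (1/p) + (p' - 2) * (1/p') = 0"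
    using conjugate_exponents p_gt_1 p'_gt_1 by (simp add: field_simps)
  then have "(real n + 1) powr ((p - 2) * (1/p)) * (real n + 1) powr ((p' - 2) * (1/p')) = 1"
    unfolding powr_add[symmetric] by simp
  then show ?thesis
    unfolding HL_weight_def using moment_pos_exponents[of p n] moment_pos_exponents[of p' n]
    by (simp add: powr_mult powr_powr)
qed

lemma pairing_weight_le_HL_weights:
  "pairing_weight n \<le> K * (HL_weight \<omega> p n powr (1/p) * HL_weight \<omega> p' n powr (1/p'))"
proof -
  have "pairing_weight n = pairing_weight n powr (1/p) * pairing_weight n powr (1/p')"
    using pairing_weight_pos[of n] conjugate_exponents by (simp add: powr_add[symmetric])
  also have "\<dots> \<le> (K * moment \<omega> (real n * p + 1)) powr (1/p) * (K * moment \<omega> (real n * p' + 1)) powr (1/p')"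
    using pairing_weight_le_moment[of p n] pairing_weight_le_moment[of p' n] pairing_weight_pos[of n]
      p_gt_1 p'_gt_1
    by (intro mult_mono powr_mono2) auto
  also have "\<dots> = (K powr (1/p) * K powr (1/p'))
                   * (moment \<omega> (real n * p + 1) powr (1/p) * moment \<omega> (real n * p' + 1) powr (1/p'))"
    using K_pos moment_pos_exponents[of p n] moment_pos_exponents[of p' n] by (simp add: powr_mult)
  also have "K powr (1/p) * K powr (1/p') = K"
    using K_pos conjugate_exponents by (simp add: powr_add[symmetric])
  finally show ?thesis
    unfolding HL_weight_geometric_mean .
qed

lemma HL_weights_le_pairing_weight:
  "HL_weight \<omega> p' n powr (p - 1) * HL_weight \<omega> p n \<le> K powr p * pairing_weight n powr p"
proof -
  define A where "A = moment \<omega> (real n * p + 1)"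
  define B where "B = moment \<omega> (real n * p' + 1)"
  have "0 < A" "0 < B"
    unfolding A_def B_def using moment_pos_exponents by auto
  have "(p' - 2) * (p - 1) + (p - 2) = 0"
    using p_gt_1 unfolding conjugate by (simp add: field_simps)
  then have "(real n + 1) powr ((p' - 2) * (p - 1)) * (real n + 1) powr (p - 2) = 1"
    unfolding powr_add[symmetric] by simp
  then have "HL_weight \<omega> p' n powr (p - 1) * HL_weight \<omega> p n = B powr (p - 1) * A"
    unfolding HL_weight_def A_def[symmetric] B_def[symmetric] using \<open>0 < A\<close> \<open>0 < B\<close>
    by (simp add: powr_mult powr_powr)
  also have "\<dots> \<le> (K * pairing_weight n) powr (p - 1) * (K * pairing_weight n)"
    using moment_le_pairing_weight[of p n] moment_le_pairing_weight[of p' n] \<open>0 < A\<close> \<open>0 < B\<close> p_gt_1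
    unfolding A_def B_def by (intro mult_mono powr_mono2) auto
  also have "\<dots> = K powr p * pairing_weight n powr p"
    using K_pos pairing_weight_pos[of n] by (simp add: powr_diff powr_mult field_simps)
  finally show ?thesis .
qed

lemma pairing_series_abs_convergent:
  assumes f: "in_HL \<omega> p f" and g: "in_HL \<omega> p' g"
  shows "summable (\<lambda>n. norm (tcoeff f n * cnj (tcoeff g n) * of_real (pairing_weight n)))"
    and "(\<Sum>n. norm (tcoeff f n * cnj (tcoeff g n) * of_real (pairing_weight n)))
           \<le> K * (HL_norm \<omega> p f * HL_norm \<omega> p' g)"
proof -
  define x where "x n = norm (tcoeff f n) * HL_weight \<omega> p n powr (1/p)" for n
  define y where "y n = norm (tcoeff g n) * HL_weight \<omega> p' n powr (1/p')" for n
  have xp: "x n powr p = HL_sum \<omega> p f n" for n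
    unfolding x_def HL_sum_eq using HL_weight_pos_exponents[of p n] p_gt_1
    by (simp add: powr_mult powr_powr)
  have yp: "y n powr p' = HL_sum \<omega> p' g n" for n
    unfolding y_def HL_sum_eq using HL_weight_pos_exponents[of p' n] p'_gt_1
    by (simp add: powr_mult powr_powr)
  have sx: "summable (\<lambda>n. x n powr p)" and sy: "summable (\<lambda>n. y n powr p')"
    unfolding xp yp using f g by (auto simp: in_HL_def)
  have "0 \<le> x n" "0 \<le> y n" for n
    unfolding x_def y_def by simp_all
  note Holder = Holder_inequality_series[OF p_gt_1 p'_gt_1 conjugate_exponents this sx sy]
  have term_le: "norm (tcoeff f n * cnj (tcoeff g n) * of_real (pairing_weight n)) \<le> K * (x n * y n)" for n
  proof -
    have "norm (tcoeff f n * cnj (tcoeff g n) * of_real (pairing_weight n))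
          = norm (tcoeff f n) * norm (tcoeff g n) * pairing_weight n"
      using pairing_weight_pos[of n] by (simp add: norm_mult)
    also have "\<dots> \<le> norm (tcoeff f n) * norm (tcoeff g n)
                     * (K * (HL_weight \<omega> p n powr (1/p) * HL_weight \<omega> p' n powr (1/p')))"
      by (intro mult_left_mono pairing_weight_le_HL_weights) auto
    finally show ?thesis
      unfolding x_def y_def by (simp add: ac_simps)
  qed
  have s_xy: "summable (\<lambda>n. K * (x n * y n))"
    using Holder(1) by (rule summable_mult)
  show summable: "summable (\<lambda>n. norm (tcoeff f n * cnj (tcoeff g n) * of_real (pairing_weight n)))"
    by (rule summable_comparison_test'[OF s_xy]) (use term_le in auto)
  have "(\<Sum>n. norm (tcoeff f n * cnj (tcoeff g n) * of_real (pairing_weight n))) \<le> (\<Sum>n. K * (x n * y n))"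
    by (rule suminf_le[OF term_le summable s_xy])
  also have "\<dots> = K * (\<Sum>n. x n * y n)"
    using Holder(1) by (simp add: suminf_mult)
  also have "\<dots> \<le> K * (HL_norm \<omega> p f * HL_norm \<omega> p' g)"
    using Holder(2) K_pos unfolding HL_norm_def xp yp by (intro mult_left_mono) auto
  finally show "(\<Sum>n. norm (tcoeff f n * cnj (tcoeff g n) * of_real (pairing_weight n)))
                  \<le> K * (HL_norm \<omega> p f * HL_norm \<omega> p' g)" .
qed

lemma pair_r_summable:
  assumes "in_HL \<omega> p f" and "in_HL \<omega> p' g" and "r \<in> {0..<1}"
  shows "summable (\<lambda>n. tcoeff f n * cnj (tcoeff g n) * of_real (pairing_weight n) * of_real r ^ n)"
proof (rule summable_norm_cancel, rule summable_comparison_test'[OF pairing_series_abs_convergent(1)[OF assms(1,2)]])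
  fix n
  have "norm (tcoeff f n * cnj (tcoeff g n) * of_real (pairing_weight n) * of_real r ^ n)
        = norm (tcoeff f n * cnj (tcoeff g n) * of_real (pairing_weight n)) * r ^ n"
    using assms(3) by (simp add: norm_mult norm_power)
  also have "\<dots> \<le> norm (tcoeff f n * cnj (tcoeff g n) * of_real (pairing_weight n))"
    using assms(3) by (intro mult_left_le power_le_one) auto
  finally show "norm (norm (tcoeff f n * cnj (tcoeff g n) * of_real (pairing_weight n) * of_real r ^ n))
                \<le> norm (tcoeff f n * cnj (tcoeff g n) * of_real (pairing_weight n))"
    by simp
qed

lemma pair_r_tendsto:
  assumes "in_HL \<omega> p f" and "in_HL \<omega> p' g"
  shows "(pair_r \<omega> f g \<longlongrightarrow> (\<Sum>n. tcoeff f n * cnj (tcoeff g n) * of_real (pairing_weight n))) (at_left 1)"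
  using abel_tendsto_at_left_1[OF pairing_series_abs_convergent(1)[OF assms]] unfolding pair_r_def by simp

lemma pairing_eq_suminf:
  assumes "in_HL \<omega> p f" and "in_HL \<omega> p' g"
  shows "pairing \<omega> f g = (\<Sum>n. tcoeff f n * cnj (tcoeff g n) * of_real (pairing_weight n))"
  unfolding pairing_def using pair_r_tendsto[OF assms] by (intro tendsto_Lim) auto

lemma norm_pairing_le:
  assumes f: "in_HL \<omega> p f" and g: "in_HL \<omega> p' g"
  shows "norm (pairing \<omega> f g) \<le> K * HL_norm \<omega> p' g * HL_norm \<omega> p f"
proof -
  have "norm (pairing \<omega> f g) \<le> (\<Sum>n. norm (tcoeff f n * cnj (tcoeff g n) * of_real (pairing_weight n)))"
    unfolding pairing_eq_suminf[OF f g] by (rule summable_norm[OF pairing_series_abs_convergent(1)[OF f g]])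
  also have "\<dots> \<le> K * (HL_norm \<omega> p f * HL_norm \<omega> p' g)"
    by (rule pairing_series_abs_convergent(2)[OF f g])
  finally show ?thesis
    by (simp add: ac_simps)
qed

lemma pairing_poly_trunc:
  assumes g: "in_HL \<omega> p' g"
  shows "pairing \<omega> (poly_trunc a N) g = (\<Sum>n<N. a n * cnj (tcoeff g n) * of_real (pairing_weight n))"
proof -
  have "(\<Sum>n. tcoeff (poly_trunc a N) n * cnj (tcoeff g n) * of_real (pairing_weight n))
        = (\<Sum>n<N. tcoeff (poly_trunc a N) n * cnj (tcoeff g n) * of_real (pairing_weight n))"
    by (rule suminf_finite) (auto simp: tcoeff_poly_trunc)
  then show ?thesis
    unfolding pairing_eq_suminf[OF in_HL_poly_trunc g] by (simp add: tcoeff_poly_trunc)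
qed

text \<open>The extremal coefficients of \<open>l\<^sup>p\<close>-duality, adapted to the weights: paired with \<open>b = tcoeff g\<close> they
  give the partial sums of \<open>\<parallel>g\<parallel>\<^sup>p\<^sup>'\<close>, while the \<open>HL\<^sup>\<omega>\<^sub>p\<close>-norm of the polynomial they define is at
  most \<open>K\<close> times the \<open>p\<close>-th root of the same partial sum.\<close>

definition norming_coeffs :: "(nat \<Rightarrow> complex) \<Rightarrow> nat \<Rightarrow> complex" where
  "norming_coeffs b n = b n * of_real (norm (b n) powr (p' - 2) * HL_weight \<omega> p' n / pairing_weight n)"

lemma norming_coeffs_pairing:
  "norming_coeffs b n * cnj (b n) * of_real (pairing_weight n) = of_real (norm (b n) powr p' * HL_weight \<omega> p' n)"
proof (cases "b n = 0")
  case False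
  let ?w = "HL_weight \<omega> p' n"
  have "norming_coeffs b n * cnj (b n) * of_real (pairing_weight n)
        = (b n * cnj (b n)) * of_real (norm (b n) powr (p' - 2) * ?w / pairing_weight n * pairing_weight n)"
    unfolding norming_coeffs_def by (simp add: ac_simps)
  also have "b n * cnj (b n) = of_real (norm (b n) powr 2)"
    using False complex_norm_square[of "b n"] by (simp add: powr_realpow)
  also have "of_real (norm (b n) powr 2) * of_real (norm (b n) powr (p' - 2) * ?w / pairing_weight n * pairing_weight n)
             = (of_real (norm (b n) powr 2 * norm (b n) powr (p' - 2) * ?w) :: complex)"
    using pairing_weight_pos[of n] by simp
  also have "norm (b n) powr 2 * norm (b n) powr (p' - 2) = norm (b n) powr p'"
    unfolding powr_add[symmetric] by simp
  finally show ?thesis .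
qed (simp add: norming_coeffs_def)

lemma norming_coeffs_HL_sum_le:
  "norm (norming_coeffs b n) powr p * HL_weight \<omega> p n \<le> K powr p * (norm (b n) powr p' * HL_weight \<omega> p' n)"
proof (cases "b n = 0")
  case False
  define t w d where "t = norm (b n)" and "w = HL_weight \<omega> p' n" and "d = pairing_weight n"
  have "0 < t" "0 < w" "0 < d"
    unfolding t_def w_def d_def using False HL_weight_pos_exponents pairing_weight_pos by auto
  have "norm (norming_coeffs b n) = t * t powr (p' - 2) * w / d"
    unfolding norming_coeffs_def t_def w_def d_def using HL_weight_pos_exponents[of p' n] pairing_weight_pos[of n]
    by (simp add: norm_mult norm_divide del: of_real_mult of_real_divide)
  also have "t * t powr (p' - 2) = t powr (p' - 1)"
  proof -
    have "t powr (p' - 1) = t powr 1 * t powr (p' - 2)"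
      unfolding powr_add[symmetric] by simp
    then show ?thesis
      using \<open>0 < t\<close> by simp
  qed
  finally have "norm (norming_coeffs b n) powr p = t powr ((p' - 1) * p) * w powr p / d powr p"
    using \<open>0 < t\<close> \<open>0 < w\<close> \<open>0 < d\<close> by (simp add: powr_mult powr_divide powr_powr)
  also have "(p' - 1) * p = p'"
    using p_gt_1 unfolding conjugate by (simp add: field_simps)
  also have "w powr p = w * w powr (p - 1)"
    using \<open>0 < w\<close> by (simp add: powr_diff)
  finally have "norm (norming_coeffs b n) powr p * HL_weight \<omega> p n
                  = t powr p' * w * (w powr (p - 1) * HL_weight \<omega> p n) / d powr p"
    by (simp add: field_simps)
  also have "\<dots> \<le> t powr p' * w * (K powr p * d powr p) / d powr p"
    using HL_weights_le_pairing_weight[of n] \<open>0 < w\<close> unfolding w_def[symmetric] d_def[symmetric]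
    by (intro divide_right_mono mult_left_mono) auto
  also have "\<dots> = K powr p * (t powr p' * w)"
    using \<open>0 < d\<close> by simp
  finally show ?thesis
    unfolding t_def w_def .
qed (use p_gt_1 in \<open>simp add: norming_coeffs_def\<close>)

lemma HL_partial_sum_le_of_norming_bound:
  assumes "0 \<le> M"
    and bound: "(\<Sum>n<N. norm (b n) powr p' * HL_weight \<omega> p' n) \<le> M * HL_norm \<omega> p (poly_trunc (norming_coeffs b) N)"
  shows "(\<Sum>n<N. norm (b n) powr p' * HL_weight \<omega> p' n) \<le> (M * K) powr p'"
proof -
  define S where "S = (\<Sum>n<N. norm (b n) powr p' * HL_weight \<omega> p' n)"
  have "0 \<le> S"
    unfolding S_def using HL_weight_pos_exponents[of p'] by (intro sum_nonneg mult_nonneg_nonneg) (simp_all add: less_imp_le)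
  have "HL_norm \<omega> p (poly_trunc (norming_coeffs b) N)
          = (\<Sum>n<N. norm (norming_coeffs b n) powr p * HL_weight \<omega> p n) powr (1/p)"
    by (rule HL_norm_poly_trunc)
  also have "\<dots> \<le> (K powr p * S) powr (1/p)"
    unfolding S_def sum_distrib_left using p_gt_1 HL_weight_pos_exponents[of p]
    by (intro powr_mono2 sum_mono norming_coeffs_HL_sum_le sum_nonneg mult_nonneg_nonneg)
      (simp_all add: less_imp_le)
  also have "\<dots> = K * S powr (1/p)"
    using K_pos \<open>0 \<le> S\<close> p_gt_1 by (simp add: powr_mult powr_powr)
  finally have "S \<le> M * (K * S powr (1/p))"
    using bound \<open>0 \<le> M\<close> unfolding S_def[symmetric] by (meson mult_left_mono order_trans)
  then have "S \<le> (M * K) * S powr (1/p)"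
    by (simp add: ac_simps)
  show ?thesis
  proof (cases "S = 0")
    case False
    then have "0 < S"
      using \<open>0 \<le> S\<close> by simp
    have "S powr (1/p') * S powr (1/p) \<le> (M * K) * S powr (1/p)"
      using \<open>S \<le> (M * K) * S powr (1/p)\<close> \<open>0 < S\<close> conjugate_exponents
      by (simp add: powr_add[symmetric] add.commute)
    then have "S powr (1/p') \<le> M * K"
      using \<open>0 < S\<close> by simp
    then have "(S powr (1/p')) powr p' \<le> (M * K) powr p'"
      using p'_gt_1 by (intro powr_mono2) auto
    then show ?thesis
      unfolding S_def[symmetric] using \<open>0 < S\<close> p'_gt_1 by (simp add: powr_powr)
  qed (simp add: S_def[symmetric])
qed

lemma bound_constant_nonneg:
  assumes "\<And>f. in_HL \<omega> p f \<Longrightarrow> norm (L f) \<le> M * HL_norm \<omega> p f"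
  shows "0 \<le> M"
proof -
  have "HL_norm \<omega> p (poly_trunc (\<lambda>n. 1) 1) = moment \<omega> 1 powr (1/p)"
    unfolding HL_norm_poly_trunc HL_weight_def by simp
  then have "0 < HL_norm \<omega> p (poly_trunc (\<lambda>n. 1) 1)"
    using moment_pos[OF weight, of 1] by simp
  moreover have "0 \<le> M * HL_norm \<omega> p (poly_trunc (\<lambda>n. 1) 1)"
    using assms[OF in_HL_poly_trunc] norm_ge_zero order_trans by blast
  ultimately show ?thesis
    by (simp add: zero_le_mult_iff)
qed

lemma HL_norm_le_of_pairing_bound:
  assumes g: "in_HL \<omega> p' g"
    and bound: "\<And>f. in_HL \<omega> p f \<Longrightarrow> norm (pairing \<omega> f g) \<le> M * HL_norm \<omega> p f"
  shows "1 / K * HL_norm \<omega> p' g \<le> M"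
proof -
  have "0 \<le> M"
    using bound by (rule bound_constant_nonneg)
  have partial: "(\<Sum>n<N. HL_sum \<omega> p' g n) \<le> (M * K) powr p'" for N
    unfolding HL_sum_eq
  proof (rule HL_partial_sum_le_of_norming_bound[OF \<open>0 \<le> M\<close>])
    define S where "S = (\<Sum>n<N. norm (tcoeff g n) powr p' * HL_weight \<omega> p' n)"
    have "pairing \<omega> (poly_trunc (norming_coeffs (tcoeff g)) N) g = of_real S"
      unfolding pairing_poly_trunc[OF g] S_def by (simp add: norming_coeffs_pairing)
    moreover have "0 \<le> S"
      unfolding S_def using HL_weight_pos_exponents[of p'] by (intro sum_nonneg mult_nonneg_nonneg) (simp_all add: less_imp_le)
    ultimately show "S \<le> M * HL_norm \<omega> p (poly_trunc (norming_coeffs (tcoeff g)) N)"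
      using bound[OF in_HL_poly_trunc, of "norming_coeffs (tcoeff g)" N] by simp
  qed
  have "(\<Sum>n. HL_sum \<omega> p' g n) \<le> (M * K) powr p'"
    using g partial unfolding in_HL_def by (intro suminf_le_const) auto
  then have "HL_norm \<omega> p' g \<le> ((M * K) powr p') powr (1/p')"
    unfolding HL_norm_def using g HL_sum_nonneg[OF weight] p'_gt_1
    by (intro powr_mono2) (auto simp: in_HL_def intro: suminf_nonneg)
  also have "\<dots> = M * K"
    using \<open>0 \<le> M\<close> K_pos p'_gt_1 by (simp add: powr_powr)
  finally show ?thesis
    using K_pos by (simp add: field_simps)
qed

lemma pairing_determines_function:
  assumes g1: "in_HL \<omega> p' g1" and g2: "in_HL \<omega> p' g2"
    and eq: "\<And>f. in_HL \<omega> p f \<Longrightarrow> pairing \<omega> f g1 = pairing \<omega> f g2"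
    and z: "z \<in> ball 0 1"
  shows "g1 z = g2 z"
proof (rule tcoeff_eq_imp_eq_on_ball[OF _ _ _ z])
  show "g1 holomorphic_on ball 0 1" "g2 holomorphic_on ball 0 1"
    using g1 g2 unfolding in_HL_def by auto
  fix n
  define e :: "nat \<Rightarrow> complex" where "e k = (if k = n then 1 else 0)" for k
  have "pairing \<omega> (poly_trunc e (Suc n)) g1 = pairing \<omega> (poly_trunc e (Suc n)) g2"
    using eq[OF in_HL_poly_trunc] .
  then have "cnj (tcoeff g1 n) * of_real (pairing_weight n) = cnj (tcoeff g2 n) * of_real (pairing_weight n)"
    unfolding pairing_poly_trunc[OF g1] pairing_poly_trunc[OF g2] e_def by simp
  then show "tcoeff g1 n = tcoeff g2 n"
    using pairing_weight_pos[of n] by simp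
qed

lemma in_HL_monomial: "in_HL \<omega> p (\<lambda>z. c * z ^ n)"
  unfolding poly_trunc_monomial by (rule in_HL_poly_trunc)

lemma linear_functional_poly_trunc:
  assumes "linear_on_HL \<omega> p L"
  shows "L (poly_trunc a N) = (\<Sum>n<N. a n * L (\<lambda>z. z ^ n))"
proof -
  have add: "\<And>u v. in_HL \<omega> p u \<Longrightarrow> in_HL \<omega> p v \<Longrightarrow> L (\<lambda>z. u z + v z) = L u + L v"
    and scale: "\<And>c u. in_HL \<omega> p u \<Longrightarrow> L (\<lambda>z. c * u z) = c * L u"
    using assms unfolding linear_on_HL_def by blast+
  show ?thesis
  proof (induction N)
    case 0
    have "poly_trunc a 0 = (\<lambda>z. 0 * 0 ^ 0)"
      by (simp add: poly_trunc_def fun_eq_iff)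
    then show ?case
      using scale[OF in_HL_monomial, of 0 0 0] by simp
  next
    case (Suc N)
    have "poly_trunc a (Suc N) = (\<lambda>z. poly_trunc a N z + a N * z ^ N)"
      by (simp add: poly_trunc_def fun_eq_iff)
    then show ?case
      using add[OF in_HL_poly_trunc in_HL_monomial] scale[OF in_HL_monomial, of "a N" 1 N] Suc by simp
  qed
qed

lemma bounded_linear_functional_eq_pairing:
  assumes linear: "linear_on_HL \<omega> p L"
    and bound: "\<And>u. in_HL \<omega> p u \<Longrightarrow> norm (L u) \<le> M * HL_norm \<omega> p u"
    and g: "in_HL \<omega> p' g"
    and monomials: "\<And>n. L (\<lambda>z. z ^ n) = cnj (tcoeff g n) * of_real (pairing_weight n)"
    and f: "in_HL \<omega> p f"
  shows "L f = pairing \<omega> f g"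
proof -
  define tail where "tail N = (\<lambda>z. f z - poly_trunc (tcoeff f) N z)" for N
  have "(\<lambda>n. tcoeff f n * cnj (tcoeff g n) * of_real (pairing_weight n)) sums pairing \<omega> f g"
    unfolding pairing_eq_suminf[OF f g]
    using summable_norm_cancel[OF pairing_series_abs_convergent(1)[OF f g]] by (rule summable_sums)
  then have lim: "(\<lambda>N. L (poly_trunc (tcoeff f) N)) \<longlonglongrightarrow> pairing \<omega> f g"
    using linear_functional_poly_trunc[OF linear] monomials by (simp add: sums_def mult.assoc)
  have tail: "in_HL \<omega> p (tail N)" for N
    unfolding tail_def using HL_tail(1)[OF weight _ f] p_gt_1 by force
  have "(\<lambda>N. L (poly_trunc (tcoeff f) N) - L f) \<longlonglongrightarrow> 0"
  proof (rule Lim_null_comparison)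
    show "\<forall>\<^sub>F N in sequentially. norm (L (poly_trunc (tcoeff f) N) - L f) \<le> M * HL_norm \<omega> p (tail N)"
    proof (rule always_eventually, rule allI)
      fix N
      have "(\<lambda>z. poly_trunc (tcoeff f) N z + tail N z) = f"
        unfolding tail_def by simp
      then have "L f = L (poly_trunc (tcoeff f) N) + L (tail N)"
        using linear in_HL_poly_trunc[of \<omega> p "tcoeff f" N] tail[of N] unfolding linear_on_HL_def by metis
      then have "norm (L (poly_trunc (tcoeff f) N) - L f) = norm (L (tail N))"
        by (simp add: norm_minus_commute)
      also have "\<dots> \<le> M * HL_norm \<omega> p (tail N)"
        by (rule bound[OF tail])
      finally show "norm (L (poly_trunc (tcoeff f) N) - L f) \<le> M * HL_norm \<omega> p (tail N)" .
    qed
    have "(\<lambda>N. HL_norm \<omega> p (tail N)) \<longlonglongrightarrow> 0"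
      unfolding tail_def using HL_tail(2)[OF weight _ f] p_gt_1 by force
    then show "(\<lambda>N. M * HL_norm \<omega> p (tail N)) \<longlonglongrightarrow> 0"
      by (rule tendsto_mult_right_zero)
  qed
  then have "(\<lambda>N. L (poly_trunc (tcoeff f) N)) \<longlonglongrightarrow> L f"
    by (rule LIM_zero_cancel)
  from LIMSEQ_unique[OF this lim] show ?thesis .
qed

lemma bounded_linear_functional_representation:
  assumes linear: "linear_on_HL \<omega> p L"
    and bound: "\<And>u. in_HL \<omega> p u \<Longrightarrow> norm (L u) \<le> M * HL_norm \<omega> p u"
  shows "\<exists>g. in_HL \<omega> p' g \<and> (\<forall>f. in_HL \<omega> p f \<longrightarrow> L f = pairing \<omega> f g)"
proof -
  define b where "b n = cnj (L (\<lambda>z. z ^ n)) / of_real (pairing_weight n)" for n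
  have monomials: "L (\<lambda>z. z ^ n) = cnj (b n) * of_real (pairing_weight n)" for n
    unfolding b_def using pairing_weight_pos[of n] by simp
  define T where "T n = norm (b n) powr p' * HL_weight \<omega> p' n" for n
  have "0 \<le> T n" for n
    unfolding T_def using HL_weight_pos_exponents[of p' n] by simp
  have "0 \<le> M"
    using bound by (rule bound_constant_nonneg)
  have partial: "(\<Sum>n<N. T n) \<le> (M * K) powr p'" for N
  proof -
    have "L (poly_trunc (norming_coeffs b) N) = of_real (\<Sum>n<N. T n)"
      using linear_functional_poly_trunc[OF linear] monomials norming_coeffs_pairing
      by (simp add: T_def mult.assoc)
    moreover have "0 \<le> (\<Sum>n<N. T n)"
      using \<open>\<And>n. 0 \<le> T n\<close> by (rule sum_nonneg)
    ultimately have "norm (L (poly_trunc (norming_coeffs b) N)) = (\<Sum>n<N. T n)"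
      by (simp only: norm_of_real abs_of_nonneg)
    then have "(\<Sum>n<N. T n) \<le> M * HL_norm \<omega> p (poly_trunc (norming_coeffs b) N)"
      using bound[OF in_HL_poly_trunc] by metis
    then show ?thesis
      unfolding T_def by (rule HL_partial_sum_le_of_norming_bound[OF \<open>0 \<le> M\<close>])
  qed
  have "norm (b n) powr p' * HL_weight \<omega> p' n \<le> (M * K) powr p'" for n
    using member_le_sum[of n "{..<Suc n}" T] \<open>\<And>n. 0 \<le> T n\<close> partial[of "Suc n"] unfolding T_def by simp
  note series = holomorphic_if_HL_terms_bounded[OF weight less_imp_le[OF p'_gt_1] this]
  have "HL_sum \<omega> p' (\<lambda>z. \<Sum>n. b n * z ^ n) = T"
    unfolding HL_sum_eq series(2) T_def ..
  then have g: "in_HL \<omega> p' (\<lambda>z. \<Sum>n. b n * z ^ n)"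
    unfolding in_HL_def using series(1) summableI_nonneg_bounded[OF \<open>\<And>n. 0 \<le> T n\<close> partial] by simp
  have "L (\<lambda>z. z ^ n) = cnj (tcoeff (\<lambda>z. \<Sum>n. b n * z ^ n) n) * of_real (pairing_weight n)" for n
    unfolding series(2) by (rule monomials)
  with g show ?thesis
    using bounded_linear_functional_eq_pairing[OF linear bound g] by blast
qed

end

lemma Dhat_HL_duality:
  assumes "1 < p" and "p' = p / (p - 1)" and "Dhat \<omega>"
  obtains K where "HL_duality \<omega> p p' K"
proof -
  have "1 < p'"
    using assms(1) unfolding assms(2) by (simp add: field_simps)
  obtain K where "0 < K" and K: "\<And>n l. 1 \<le> l \<Longrightarrow> l \<le> max p p' \<Longrightarrow>
      moment \<omega> (real n * l + 1) \<le> K * moment \<omega> (2 * real n + 1) \<and>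
      moment \<omega> (2 * real n + 1) \<le> K * moment \<omega> (real n * l + 1)"
    using Dhat_moment_comparable[OF assms(3), of 1 "max p p'"] by auto
  have "HL_duality \<omega> p p' K"
  proof
    show "radial_weight \<omega>"
      using assms(3) unfolding Dhat_def by simp
    show "1 < p" and "p' = p / (p - 1)" and "0 < K"
      by (fact assms(1,2) \<open>0 < K\<close>)+
    fix n q assume "q \<in> {p, p'}"
    then have "1 \<le> q" and "q \<le> max p p'"
      using assms(1) \<open>1 < p'\<close> by auto
    then show "moment \<omega> (real n * q + 1) \<le> K * moment \<omega> (2 * real n + 1)"
      and "moment \<omega> (2 * real n + 1) \<le> K * moment \<omega> (real n * q + 1)"
      using K by blast+
  qed
  then show ?thesis
    by (rule that)
qed

theorem mainTheorem16:
  fixes \<omega> :: "real \<Rightarrow> real" and p p' :: real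
  assumes "1 < p" and "p' = p / (p - 1)" and "Dhat \<omega>"
  shows
    \<comment> \<open>the pairing is well defined on HL_p x HL_p'\<close>
    "(\<forall>f g. in_HL \<omega> p f \<and> in_HL \<omega> p' g \<longrightarrow>
        (\<forall>r\<in>{0..<1}. summable (\<lambda>n. tcoeff f n * cnj (tcoeff g n)
                             * of_real (moment \<omega> (2 * real n + 1)) * of_real r ^ n)) \<and>
        (pair_r \<omega> f g \<longlongrightarrow> pairing \<omega> f g) (at_left 1))
   \<and> \<comment> \<open>each g induces a bounded functional with norm comparable to the norm of g\<close>
     (\<exists>c C. 0 < c \<and> 0 < C \<and>
        (\<forall>g. in_HL \<omega> p' g \<longrightarrow>
           (\<forall>f. in_HL \<omega> p f \<longrightarrow> norm (pairing \<omega> f g) \<le> C * HL_norm \<omega> p' g * HL_norm \<omega> p f) \<and>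
           (\<forall>M. (\<forall>f. in_HL \<omega> p f \<longrightarrow> norm (pairing \<omega> f g) \<le> M * HL_norm \<omega> p f)
                  \<longrightarrow> c * HL_norm \<omega> p' g \<le> M)))
   \<and> \<comment> \<open>every bounded linear functional arises from a unique g\<close>
     (\<forall>L :: (complex \<Rightarrow> complex) \<Rightarrow> complex.
        (\<forall>f h. in_HL \<omega> p f \<and> in_HL \<omega> p h \<longrightarrow> L (\<lambda>z. f z + h z) = L f + L h) \<and>
        (\<forall>a f. in_HL \<omega> p f \<longrightarrow> L (\<lambda>z. a * f z) = a * L f) \<and>
        (\<exists>M. \<forall>f. in_HL \<omega> p f \<longrightarrow> norm (L f) \<le> M * HL_norm \<omega> p f)
      \<longrightarrow> (\<exists>g. in_HL \<omega> p' g \<and> (\<forall>f. in_HL \<omega> p f \<longrightarrow> L f = pairing \<omega> f g)) \<and>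
          (\<forall>g1 g2. in_HL \<omega> p' g1 \<and> in_HL \<omega> p' g2 \<and>
                   (\<forall>f. in_HL \<omega> p f \<longrightarrow> L f = pairing \<omega> f g1) \<and>
                   (\<forall>f. in_HL \<omega> p f \<longrightarrow> L f = pairing \<omega> f g2)
                   \<longrightarrow> (\<forall>z\<in>ball 0 1. g1 z = g2 z)))"
proof -
  obtain K where "HL_duality \<omega> p p' K"
    using Dhat_HL_duality[OF assms] .
  then interpret HL_duality \<omega> p p' K .
  show ?thesis
    apply (intro conjI allI impI ballI)
    subgoal for f g r
      by (simp add: pair_r_summable)
    subgoal for f g
      by (elim conjE) (simp add: pair_r_tendsto pairing_eq_suminf)
    subgoal
      using K_pos norm_pairing_le HL_norm_le_of_pairing_bound by (intro exI[of _ "1/K"] exI[of _ K]) simp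
    subgoal for L
      using bounded_linear_functional_representation[of L] unfolding linear_on_HL_def by blast
    subgoal for L g1 g2 z
      using pairing_determines_function[of g1 g2 z] by metis
    done
qed

end
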